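(* There exist absolute constants $\alpha>0$ and $C$ such that the following holds for all positive integers $n$. Let integers $i\ne j$ and $k=i+j$ satisfy $|i|,|j|\le2w$ and $|k|\le w$, and let $(m,M)$ be the height profile of some sum-free set $S_0\subseteq\Lambda(R\cup L)$ meeting every fiber. Then the number of sets $S'\subseteq R_i\cup R_j\cup L_k$ such that $S'=S\cap(R_i\cup R_j\cup L_k)$ for some sum-free $S\subseteq\Lambda(R\cup L)$ with height profile $(m,M)$ is at most $2^{0.3n-\alpha|M(k)-m(j)-m(i)|+C}$.
   Context: Sum-free: no $a,b,c$ (not necessarily distinct) with $a+b=c$, coordinatewise addition in $\mathbb{Z}^2$. $\Lambda(X)=\mathbb{Z}^2\cap X$. $R=\{(x,y)\in\mathbb{R}^2:0.7n\le x+y\le n,\ |x-y|\le0.8n\}$, $L=\{(x,y)\in\mathbb{R}^2:2\lceil0.7n\rceil\le x+y\le1.7n,\ |x-y|\le0.4n\}$, $w=\lfloor0.4n\rfloor$. Fibers: $R_i=\{(x,y)\in\Lambda(R):x-y=i\}$ for $|i|\le2w$ and $L_k=\{(x,y)\in\Lambda(L):x-y=k\}$ for $|k|\le w$. Height: $h(x,y)=\lfloor(x+y-\lceil0.7n\rceil)/2\rfloor$ for $(x,y)\in R$ and $h(x,y)=\lfloor(x+y-2\lceil0.7n\rceil)/2\rfloor$ for $(x,y)\in L$. For a sum-free $S\subseteq\Lambda(R\cup L)$ meeting every fiber $R_i$ ($|i|\le 2w$) and $L_k$ ($|k|\le w$), its height profile is $(m,M)$ where $m(i)=\min\{h(p):p\in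 S\cap R_i\}$ for $|i|\le2w$ and $M(k)=\max\{h(p):p\in S\cap L_k\}$ for $|k|\le w$. *)

theory Defs
  imports Complex_Main
begin

type_synonym pt = "int \<times> int"

definition sum_free :: "pt set \<Rightarrow> bool" where
  "sum_free S \<longleftrightarrow> (\<forall>a\<in>S. \<forall>b\<in>S. (fst a + fst b, snd a + snd b) \<notin> S)"

definition c07 :: "nat \<Rightarrow> int" where
  "c07 n = \<lceil>(7/10) * real n\<rceil>"

definition wid :: "nat \<Rightarrow> int" where
  "wid n = \<lfloor>(4/10) * real n\<rfloor>"

definition LamR :: "nat \<Rightarrow> pt set" where
  "LamR n = {(x, y). (7/10) * real n \<le> real_of_int (x + y) \<and> real_of_int (x + y) \<le> real n
              \<and> \<bar>real_of_int (x - y)\<bar> \<le> (8/10) * real n}"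

definition LamL :: "nat \<Rightarrow> pt set" where
  "LamL n = {(x, y). real_of_int (2 * c07 n) \<le> real_of_int (x + y)
              \<and> real_of_int (x + y) \<le> (17/10) * real n
              \<and> \<bar>real_of_int (x - y)\<bar> \<le> (4/10) * real n}"

definition fibR :: "nat \<Rightarrow> int \<Rightarrow> pt set" where
  "fibR n i = {p \<in> LamR n. fst p - snd p = i}"

definition fibL :: "nat \<Rightarrow> int \<Rightarrow> pt set" where
  "fibL n k = {p \<in> LamL n. fst p - snd p = k}"

definition hR :: "nat \<Rightarrow> pt \<Rightarrow> int" where
  "hR n p = \<lfloor>real_of_int (fst p + snd p - c07 n) / 2\<rfloor>"

definition hL :: "nat \<Rightarrow> pt \<Rightarrow> int" where
  "hL n p = \<lfloor>real_of_int (fst p + snd p - 2 * c07 n) / 2\<rfloor>"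

definition meets_all_fibers :: "nat \<Rightarrow> pt set \<Rightarrow> bool" where
  "meets_all_fibers n S \<longleftrightarrow>
     (\<forall>i. \<bar>i\<bar> \<le> 2 * wid n \<longrightarrow> S \<inter> fibR n i \<noteq> {}) \<and>
     (\<forall>k. \<bar>k\<bar> \<le> wid n \<longrightarrow> S \<inter> fibL n k \<noteq> {})"

definition has_profile :: "nat \<Rightarrow> pt set \<Rightarrow> (int \<Rightarrow> int) \<Rightarrow> (int \<Rightarrow> int) \<Rightarrow> bool" where
  "has_profile n S m M \<longleftrightarrow> meets_all_fibers n S \<and>
     (\<forall>i. \<bar>i\<bar> \<le> 2 * wid n \<longrightarrow> m i = Min (hR n ` (S \<inter> fibR n i))) \<and>
     (\<forall>k. \<bar>k\<bar> \<le> wid n \<longrightarrow> M k = Max (hL n ` (S \<inter> fibL n k)))"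

end

theory Submission
  imports Defs
begin

(* For every admissible S the lowest point of S on R_i and R_j and the highest
   point on L_k are determined by m and M. Writing the rest of S on these fibers as the anchors
   plus t(1,1) with t in A, B, resp. minus t(1,1) with t in C, sum-freeness says exactly that
   a + b + c <> E for a in A, b in B, c in C, where E = M(k) - m(j) - m(i) up to rounding, and
   0 belongs to each set. The fibers leave N1 + N2 + N3 <= 0.3n + E free positions, so it suffices
   to count such triples by 2^(N1 + N2 + N3 - (1 + 1/100) E + O(1)).

   Let a be the least positive element of A, B, C, say a in A, and split each set at L = (E-1)/2.
   A high position u is excluded from a set as soon as E - u is blocked by the low part, through
   the zeros and, for B and C, through a. Summed over the low parts this becomes a transfer-matrix
   sum over words of membership cells with an interaction at lag a, which a potential function
   bounds by 15.3^L. Since 15.3 < 2^3.99, this beats the trivial 2^(4L) by a fixed fraction of E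
   bits. *)

section \<open>A transfer-matrix bound for lagged words\<close>

type_synonym cell = "bool \<times> bool \<times> bool"

abbreviation empty_cell :: cell where
  "empty_cell \<equiv> (False, False, False)"

fun transfer_weight :: "cell \<Rightarrow> cell \<Rightarrow> real" where
  "transfer_weight (a', b', c') (a, b, c) =
     2 ^ (of_bool (\<not> b \<and> \<not> c) + of_bool (\<not> a \<and> \<not> c \<and> \<not> c') + of_bool (\<not> a \<and> \<not> b \<and> \<not> b'))"

text \<open>An approximate positive eigenvector of the lagged transfer operator, with eigenvalue at most
  $15.3 < 16$ by \<open>sum_transfer_weight_potential_le\<close>. It only depends on the B- and C-bits,
  the ones through which the lagged cell enters the weight.\<close>

fun transfer_potential :: "cell \<Rightarrow> real" where
  "transfer_potential (a, b, c) = (if b \<and> c then 30 else if b \<or> c then 40 else 57)"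

lemma transfer_weight_nonneg: "transfer_weight p s \<ge> 0"
  by (cases p; cases s) simp

lemma transfer_potential_ge: "transfer_potential s \<ge> 30"
  by (cases s) auto

lemma transfer_potential_pos: "transfer_potential s > 0"
  using transfer_potential_ge[of s] by linarith

lemma sum_transfer_weight_potential_le:
  "(\<Sum>s\<in>UNIV. transfer_weight p s * transfer_potential s) \<le> 153/10 * transfer_potential p"
  by (cases p) (simp add: UNIV_bool flip: UNIV_Times_UNIV)

text \<open>Words are read from position $1$; \<open>cell_at\<close> is empty outside $1..length$, in particular at
  \<open>r - a\<close> for \<open>r \<le> a\<close> (truncated subtraction).\<close>

definition cell_at :: "cell list \<Rightarrow> nat \<Rightarrow> cell" where
  "cell_at xs r = (if 1 \<le> r \<and> r \<le> length xs then xs ! (r - 1) else empty_cell)"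

definition word_weight :: "nat \<Rightarrow> cell list \<Rightarrow> real" where
  "word_weight a xs = (\<Prod>r\<in>{1..length xs}. transfer_weight (cell_at xs (r - a)) (cell_at xs r))"

definition window_potential :: "nat \<Rightarrow> cell list \<Rightarrow> real" where
  "window_potential a xs = (\<Prod>q<a. transfer_potential (cell_at xs (length xs - q)))"

definition lag_words :: "nat \<Rightarrow> nat \<Rightarrow> cell list set" where
  "lag_words a n = {xs. length xs = n \<and> (\<forall>r<a. cell_at xs r = empty_cell)}"

definition lag_letters :: "nat \<Rightarrow> nat \<Rightarrow> cell set" where
  "lag_letters a n = (if Suc n < a then {empty_cell} else UNIV)"

lemma cell_at_0 [simp]: "cell_at xs 0 = empty_cell"
  by (simp add: cell_at_def)

lemma cell_at_snoc: "cell_at (xs @ [s]) r = (if r = Suc (length xs) then s else cell_at xs r)"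
  by (auto simp: cell_at_def nth_append)

lemma word_weight_nonneg: "word_weight a xs \<ge> 0"
  unfolding word_weight_def by (intro prod_nonneg) (simp add: transfer_weight_nonneg)

lemma window_potential_pos: "window_potential a xs > 0"
  unfolding window_potential_def by (intro prod_pos) (simp add: transfer_potential_pos)

lemma window_potential_ge: "window_potential a xs \<ge> 30 ^ a"
proof -
  have "(\<Prod>q<a. (30::real)) \<le> window_potential a xs"
    unfolding window_potential_def by (rule prod_mono) (simp add: transfer_potential_ge)
  then show ?thesis by simp
qed

lemma word_weight_snoc:
  assumes "a \<ge> 1"
  shows "word_weight a (xs @ [s]) = word_weight a xs * transfer_weight (cell_at xs (Suc (length xs) - a)) s"
proof -
  have "word_weight a xs = (\<Prod>r\<in>{1..length xs}. transfer_weight (cell_at (xs @ [s]) (r - a)) (cell_at (xs @ [s]) r))"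
    unfolding word_weight_def by (rule prod.cong) (auto simp: cell_at_snoc)
  then show ?thesis
    using assms by (auto simp: word_weight_def prod.cl_ivl_Suc cell_at_snoc)
qed

lemma window_potential_snoc:
  assumes "a \<ge> 1"
  shows "window_potential a (xs @ [s]) * transfer_potential (cell_at xs (Suc (length xs) - a))
    = transfer_potential s * window_potential a xs"
proof -
  obtain b where b: "a = Suc b" using assms by (cases a) auto
  have "window_potential a (xs @ [s])
      = transfer_potential s * (\<Prod>q<b. transfer_potential (cell_at (xs @ [s]) (length xs - q)))"
    unfolding window_potential_def b prod.lessThan_Suc_shift by (simp add: cell_at_snoc)
  also have "(\<Prod>q<b. transfer_potential (cell_at (xs @ [s]) (length xs - q)))
      = (\<Prod>q<b. transfer_potential (cell_at xs (length xs - q)))"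
    by (rule prod.cong) (auto simp: cell_at_snoc)
  moreover have "window_potential a xs
      = (\<Prod>q<b. transfer_potential (cell_at xs (length xs - q))) * transfer_potential (cell_at xs (length xs - b))"
    unfolding window_potential_def b by simp
  moreover have "length xs - b = Suc (length xs) - a"
    using b by simp
  ultimately show ?thesis by simp
qed

lemma lag_words_Suc:
  "lag_words a (Suc n) = (\<lambda>(xs, s). xs @ [s]) ` (lag_words a n \<times> lag_letters a n)"
proof (intro set_eqI iffI)
  fix ys assume ys: "ys \<in> lag_words a (Suc n)"
  then obtain xs s where ys_eq: "ys = xs @ [s]" and len: "length xs = n"
    by (auto simp: lag_words_def length_Suc_conv_rev)
  have "xs \<in> lag_words a n" "s \<in> lag_letters a n"
    using ys len cell_at_snoc[of xs s]
    by (auto simp: ys_eq lag_words_def lag_letters_def cell_at_def split: if_splits)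
  then show "ys \<in> (\<lambda>(xs, s). xs @ [s]) ` (lag_words a n \<times> lag_letters a n)"
    using ys_eq by auto
qed (auto simp: lag_words_def lag_letters_def cell_at_snoc)

lemma finite_lag_words: "finite (lag_words a n)"
  by (rule finite_subset[OF _ finite_lists_length_eq[of "UNIV :: cell set" n]])
    (auto simp: lag_words_def)

lemma sum_lag_words_Suc:
  "(\<Sum>ys\<in>lag_words a (Suc n). f ys) = (\<Sum>xs\<in>lag_words a n. \<Sum>s\<in>lag_letters a n. f (xs @ [s]))"
proof -
  have "inj_on (\<lambda>(xs, s). xs @ [s]) (lag_words a n \<times> lag_letters a n)"
    by (auto simp: inj_on_def)
  then show ?thesis
    unfolding lag_words_Suc
    by (subst sum.reindex) (simp_all add: sum.cartesian_product case_prod_beta)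
qed

lemma sum_lag_letters_snoc_le:
  assumes a: "a \<ge> 1" and xs: "xs \<in> lag_words a n"
  shows "(\<Sum>s\<in>lag_letters a n. word_weight a (xs @ [s]) * window_potential a (xs @ [s]))
    \<le> (if Suc n < a then 8 else 153/10) * (word_weight a xs * window_potential a xs)"
proof -
  have len: "length xs = n"
    using xs by (simp add: lag_words_def)
  define p where "p = cell_at xs (Suc n - a)"
  have p_pos: "transfer_potential p > 0"
    by (rule transfer_potential_pos)
  have snoc: "word_weight a (xs @ [s]) * window_potential a (xs @ [s])
      = word_weight a xs * window_potential a xs / transfer_potential p * (transfer_weight p s * transfer_potential s)"
    for s
    using word_weight_snoc[OF a, of xs s] window_potential_snoc[OF a, of xs s] p_pos len
    by (simp add: p_def field_simps)
  show ?thesis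
  proof (cases "Suc n < a")
    case True
    then have "p = empty_cell"
      by (simp add: p_def)
    then show ?thesis
      using True p_pos by (simp add: lag_letters_def snoc)
  next
    case False
    have "(\<Sum>s\<in>lag_letters a n. word_weight a (xs @ [s]) * window_potential a (xs @ [s]))
        = word_weight a xs * window_potential a xs / transfer_potential p
          * (\<Sum>s\<in>UNIV. transfer_weight p s * transfer_potential s)"
      using False by (simp add: lag_letters_def snoc sum_distrib_left)
    also have "\<dots> \<le> word_weight a xs * window_potential a xs / transfer_potential p
          * (153/10 * transfer_potential p)"
      using p_pos word_weight_nonneg[of a xs] window_potential_pos[of a xs]
      by (intro mult_left_mono sum_transfer_weight_potential_le) auto
    finally show ?thesis
      using False p_pos by simp
  qed
qed

lemma sum_word_weight_window_potential_le:
  assumes "a \<ge> 1"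
  shows "(\<Sum>xs\<in>lag_words a n. word_weight a xs * window_potential a xs)
    \<le> 57 ^ a * 8 ^ min n (a - 1) * (153/10) ^ (n - (a - 1))"
proof (induction n)
  case 0
  have "lag_words a 0 = {[]}"
    by (auto simp: lag_words_def cell_at_def)
  then show ?case
    by (simp add: word_weight_def window_potential_def cell_at_def)
next
  case (Suc n)
  define rate :: real where "rate = (if Suc n < a then 8 else 153/10)"
  have "(\<Sum>ys\<in>lag_words a (Suc n). word_weight a ys * window_potential a ys)
      \<le> (\<Sum>xs\<in>lag_words a n. rate * (word_weight a xs * window_potential a xs))"
    unfolding sum_lag_words_Suc rate_def by (intro sum_mono sum_lag_letters_snoc_le assms)
  also have "\<dots> \<le> rate * (57 ^ a * 8 ^ min n (a - 1) * (153/10) ^ (n - (a - 1)))"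
    unfolding sum_distrib_left[symmetric] by (rule mult_left_mono[OF Suc.IH]) (simp add: rate_def)
  also have "\<dots> = 57 ^ a * 8 ^ min (Suc n) (a - 1) * (153/10) ^ (Suc n - (a - 1))"
  proof (cases "Suc n < a")
    case True
    then have "min (Suc n) (a - 1) = Suc (min n (a - 1))" "Suc n - (a - 1) = n - (a - 1)"
      by auto
    then show ?thesis
      using True by (simp add: rate_def)
  next
    case False
    then have "min (Suc n) (a - 1) = min n (a - 1)" "Suc n - (a - 1) = Suc (n - (a - 1))"
      by auto
    then show ?thesis
      using False by (simp add: rate_def)
  qed
  finally show ?case .
qed

lemma sum_word_weight_le:
  assumes "1 \<le> a" "a \<le> n + 1"
  shows "(\<Sum>xs\<in>lag_words a n. word_weight a xs) \<le> (153/10) ^ (n + 1) / 8"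
proof -
  have "(\<Sum>xs\<in>lag_words a n. word_weight a xs)
      \<le> (\<Sum>xs\<in>lag_words a n. word_weight a xs * window_potential a xs / 30 ^ a)"
  proof (rule sum_mono)
    fix xs
    have "word_weight a xs * 30 ^ a \<le> word_weight a xs * window_potential a xs"
      using window_potential_ge word_weight_nonneg by (intro mult_left_mono)
    then show "word_weight a xs \<le> word_weight a xs * window_potential a xs / 30 ^ a"
      by (simp add: field_simps)
  qed
  also have "\<dots> \<le> 57 ^ a * 8 ^ (a - 1) * (153/10) ^ (n + 1 - a) / 30 ^ a"
  proof -
    have "min n (a - 1) = a - 1" "n - (a - 1) = n + 1 - a"
      using assms by auto
    then show ?thesis
      using sum_word_weight_window_potential_le[OF assms(1), of n]
      by (simp add: sum_divide_distrib[symmetric] divide_right_mono)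
  qed
  also have "\<dots> = (76/5) ^ a * (153/10) ^ (n + 1 - a) / 8"
    \<comment> \<open>the $a - 1$ forced empty cells contribute $8$ each, and $57 \cdot 8 / 30 < 15.3$\<close>
  proof -
    obtain b where b: "a = Suc b"
      using assms by (cases a) auto
    have "(76/5 :: real) ^ a = 57 ^ a * 8 ^ a / 30 ^ a"
      by (simp flip: power_divide power_mult_distrib)
    then show ?thesis
      by (simp add: b field_simps)
  qed
  also have "\<dots> \<le> (153/10) ^ a * (153/10) ^ (n + 1 - a) / 8"
    by (intro divide_right_mono mult_right_mono power_mono) auto
  also have "\<dots> = (153/10) ^ (n + 1) / 8"
    using assms by (simp flip: power_add)
  finally show ?thesis .
qed

section \<open>Triples of sets avoiding a fixed sum\<close>

definition avoiding_triples :: "nat \<Rightarrow> nat \<Rightarrow> nat \<Rightarrow> int \<Rightarrow> (nat set \<times> nat set \<times> nat set) set" where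
  "avoiding_triples N1 N2 N3 E = {(A, B, C). A \<subseteq> {..N1} \<and> B \<subseteq> {..N2} \<and> C \<subseteq> {..N3} \<and>
      0 \<in> A \<and> 0 \<in> B \<and> 0 \<in> C \<and> (\<forall>a\<in>A. \<forall>b\<in>B. \<forall>c\<in>C. int (a + b + c) \<noteq> E)}"

definition triples_led_by_A :: "nat \<Rightarrow> nat \<Rightarrow> nat \<Rightarrow> nat \<Rightarrow> nat \<Rightarrow> nat \<Rightarrow> (nat set \<times> nat set \<times> nat set) set" where
  "triples_led_by_A N1 N2 N3 E L a = {(A, B, C) \<in> avoiding_triples N1 N2 N3 (int E).
      (\<forall>t\<in>{1..<a}. t \<notin> A \<and> t \<notin> B \<and> t \<notin> C) \<and> (a \<le> L \<longrightarrow> a \<in> A)}"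

definition low_word :: "nat \<Rightarrow> nat set \<Rightarrow> nat set \<Rightarrow> nat set \<Rightarrow> cell list" where
  "low_word L A B C = map (\<lambda>t. (t \<in> A, t \<in> B, t \<in> C)) [1..<L + 1]"

text \<open>If the least positive element $a$ of $A \cup B \cup C$ lies in $A$, a position $u > L$ may lie
  in $A$ only if $E - u$ is in neither $B$ nor $C$ (as $0 \in B, C$), and in $B$ only if $E - u$ is in
  neither $A$ nor $C$ and $E - u - a \notin C$ (as $a \in A$); symmetrically for $C$. For $E - u \le L$
  this is read off the low part of the triple.\<close>

definition blocked_A :: "cell list \<Rightarrow> nat \<Rightarrow> bool" where
  "blocked_A xs t \<longleftrightarrow> (case cell_at xs t of (_, b, c) \<Rightarrow> b \<or> c)"

definition blocked_B :: "nat \<Rightarrow> cell list \<Rightarrow> nat \<Rightarrow> bool" where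
  "blocked_B a xs t \<longleftrightarrow>
     (case cell_at xs t of (a', _, c) \<Rightarrow> a' \<or> c) \<or> (case cell_at xs (t - a) of (_, _, c') \<Rightarrow> c')"

definition blocked_C :: "nat \<Rightarrow> cell list \<Rightarrow> nat \<Rightarrow> bool" where
  "blocked_C a xs t \<longleftrightarrow>
     (case cell_at xs t of (a', b, _) \<Rightarrow> a' \<or> b) \<or> (case cell_at xs (t - a) of (_, b', _) \<Rightarrow> b')"

lemma finite_avoiding_triples: "finite (avoiding_triples N1 N2 N3 E)"
  by (rule finite_subset[of _ "Pow {..N1} \<times> Pow {..N2} \<times> Pow {..N3}"])
    (auto simp: avoiding_triples_def)

lemma length_low_word [simp]: "length (low_word L A B C) = L"
  by (simp add: low_word_def)

lemma cell_at_low_word: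
  "cell_at (low_word L A B C) t = (if 1 \<le> t \<and> t \<le> L then (t \<in> A, t \<in> B, t \<in> C) else empty_cell)"
  by (auto simp: cell_at_def low_word_def simp del: upt_Suc)

lemma transfer_weight_eq_blocked:
  "transfer_weight (cell_at xs (t - a)) (cell_at xs t) =
     2 ^ (of_bool (\<not> blocked_A xs t) + of_bool (\<not> blocked_B a xs t) + of_bool (\<not> blocked_C a xs t))"
  unfolding blocked_A_def blocked_B_def blocked_C_def
  by (cases "cell_at xs t"; cases "cell_at xs (t - a)") auto

lemma word_weight_eq_blocked:
  "word_weight a xs = 2 ^ (card {t\<in>{1..length xs}. \<not> blocked_A xs t}
     + card {t\<in>{1..length xs}. \<not> blocked_B a xs t} + card {t\<in>{1..length xs}. \<not> blocked_C a xs t})"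
proof -
  have "word_weight a xs = (\<Prod>t\<in>{1..length xs}. (2::real) ^
      (of_bool (\<not> blocked_A xs t) + of_bool (\<not> blocked_B a xs t) + of_bool (\<not> blocked_C a xs t)))"
    unfolding word_weight_def transfer_weight_eq_blocked ..
  also have "\<dots> = 2 ^ (\<Sum>t\<in>{1..length xs}.
      of_bool (\<not> blocked_A xs t) + of_bool (\<not> blocked_B a xs t) + of_bool (\<not> blocked_C a xs t))"
    by (simp add: power_sum)
  finally show ?thesis
    by (simp add: sum.distrib Int_def Collect_conj_eq[symmetric])
qed

lemma card_high_positions_le:
  assumes "E \<le> 2 * L + 2"
  shows "card {u. L < u \<and> u \<le> N \<and> u \<noteq> E \<and> P (E - u)} \<le> (N - E) + 1 + card {t\<in>{1..L}. P t}"
proof -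
  have "{u. L < u \<and> u \<le> N \<and> u \<noteq> E \<and> P (E - u)}
      \<subseteq> {E<..N} \<union> {L<..<E - L} \<union> (\<lambda>t. E - t) ` {t\<in>{1..L}. P t}"
  proof
    fix u assume u: "u \<in> {u. L < u \<and> u \<le> N \<and> u \<noteq> E \<and> P (E - u)}"
    show "u \<in> {E<..N} \<union> {L<..<E - L} \<union> (\<lambda>t. E - t) ` {t\<in>{1..L}. P t}"
    proof (cases "E < u \<or> L < E - u")
      case False
      then have "E - u \<in> {t\<in>{1..L}. P t}" "u = E - (E - u)"
        using u by auto
      then show ?thesis by blast
    qed (use u in auto)
  qed
  then have "card {u. L < u \<and> u \<le> N \<and> u \<noteq> E \<and> P (E - u)}
      \<le> card ({E<..N} \<union> {L<..<E - L} \<union> (\<lambda>t. E - t) ` {t\<in>{1..L}. P t})"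
    by (rule card_mono[rotated]) auto
  also have "\<dots> \<le> card {E<..N} + card {L<..<E - L} + card ((\<lambda>t. E - t) ` {t\<in>{1..L}. P t})"
    by (meson card_Un_le le_trans add_right_mono)
  also have "\<dots> \<le> (N - E) + 1 + card {t\<in>{1..L}. P t}"
    \<comment> \<open>at most one $u$ has both $u > L$ and $E - u > L$, since $E \le 2L + 2$\<close>
    using assms card_image_le[of "{t\<in>{1..L}. P t}" "\<lambda>t. E - t"] by simp
  finally show ?thesis .
qed

lemma blocked_low_word:
  "blocked_A (low_word L A B C) t \<longleftrightarrow> 1 \<le> t \<and> t \<le> L \<and> (t \<in> B \<or> t \<in> C)"
  "blocked_B a (low_word L A B C) t \<longleftrightarrow>
     1 \<le> t \<and> t \<le> L \<and> (t \<in> A \<or> t \<in> C) \<or> 1 \<le> t - a \<and> t - a \<le> L \<and> t - a \<in> C"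
  "blocked_C a (low_word L A B C) t \<longleftrightarrow>
     1 \<le> t \<and> t \<le> L \<and> (t \<in> A \<or> t \<in> B) \<or> 1 \<le> t - a \<and> t - a \<le> L \<and> t - a \<in> B"
  by (auto simp: blocked_A_def blocked_B_def blocked_C_def cell_at_low_word)

lemma high_part_unblocked:
  assumes X: "(A, B, C) \<in> triples_led_by_A N1 N2 N3 E L a" and EL: "E \<le> 2 * L + 2"
  defines "xs \<equiv> low_word L A B C"
  shows "A \<inter> {L<..} \<subseteq> {u. L < u \<and> u \<le> N1 \<and> u \<noteq> E \<and> \<not> blocked_A xs (E - u)}"
    and "B \<inter> {L<..} \<subseteq> {u. L < u \<and> u \<le> N2 \<and> u \<noteq> E \<and> \<not> blocked_B a xs (E - u)}"
    and "C \<inter> {L<..} \<subseteq> {u. L < u \<and> u \<le> N3 \<and> u \<noteq> E \<and> \<not> blocked_C a xs (E - u)}"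
proof -
  have T: "(A, B, C) \<in> avoiding_triples N1 N2 N3 (int E)" and lead: "a \<le> L \<Longrightarrow> a \<in> A"
    using X by (auto simp: triples_led_by_A_def)
  then have bounds: "A \<subseteq> {..N1}" "B \<subseteq> {..N2}" "C \<subseteq> {..N3}"
    and zero: "0 \<in> A" "0 \<in> B" "0 \<in> C"
    by (auto simp: avoiding_triples_def)
  have no_sum: "x + y + z \<noteq> E" if "x \<in> A" "y \<in> B" "z \<in> C" for x y z
    using T that unfolding avoiding_triples_def by force
  have lead_below: "a \<in> A" if "L < u" "1 \<le> E - u - a" for u
    using that EL lead by linarith
  show "A \<inter> {L<..} \<subseteq> {u. L < u \<and> u \<le> N1 \<and> u \<noteq> E \<and> \<not> blocked_A xs (E - u)}"
  proof
    fix u assume "u \<in> A \<inter> {L<..}"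
    then show "u \<in> {u. L < u \<and> u \<le> N1 \<and> u \<noteq> E \<and> \<not> blocked_A xs (E - u)}"
      using bounds zero no_sum[of u 0 0] no_sum[of u "E - u" 0] no_sum[of u 0 "E - u"]
      by (auto simp: xs_def blocked_low_word)
  qed
  show "B \<inter> {L<..} \<subseteq> {u. L < u \<and> u \<le> N2 \<and> u \<noteq> E \<and> \<not> blocked_B a xs (E - u)}"
  proof
    fix u assume "u \<in> B \<inter> {L<..}"
    then show "u \<in> {u. L < u \<and> u \<le> N2 \<and> u \<noteq> E \<and> \<not> blocked_B a xs (E - u)}"
      using bounds zero lead_below[of u] no_sum[of 0 u 0] no_sum[of "E - u" u 0] no_sum[of 0 u "E - u"]
        no_sum[of a u "E - u - a"]
      by (auto simp: xs_def blocked_low_word)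
  qed
  show "C \<inter> {L<..} \<subseteq> {u. L < u \<and> u \<le> N3 \<and> u \<noteq> E \<and> \<not> blocked_C a xs (E - u)}"
  proof
    fix u assume "u \<in> C \<inter> {L<..}"
    then show "u \<in> {u. L < u \<and> u \<le> N3 \<and> u \<noteq> E \<and> \<not> blocked_C a xs (E - u)}"
      using bounds zero lead_below[of u] no_sum[of 0 0 u] no_sum[of "E - u" 0 u] no_sum[of 0 "E - u" u]
        no_sum[of a "E - u - a" u]
      by (auto simp: xs_def blocked_low_word)
  qed
qed

lemma unblocked_high_positions_le:
  assumes xs: "length xs = L" and EL: "E \<le> 2 * L + 2" and EN: "E \<le> N1" "E \<le> N2" "E \<le> N3"
  shows "(2::real) ^ (card {u. L < u \<and> u \<le> N1 \<and> u \<noteq> E \<and> \<not> blocked_A xs (E - u)}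
      + card {u. L < u \<and> u \<le> N2 \<and> u \<noteq> E \<and> \<not> blocked_B a xs (E - u)}
      + card {u. L < u \<and> u \<le> N3 \<and> u \<noteq> E \<and> \<not> blocked_C a xs (E - u)})
    \<le> 2 ^ (N1 + N2 + N3 - 3 * E + 3) * word_weight a xs"
proof -
  have "(2::real) ^ (card {u. L < u \<and> u \<le> N1 \<and> u \<noteq> E \<and> \<not> blocked_A xs (E - u)}
      + card {u. L < u \<and> u \<le> N2 \<and> u \<noteq> E \<and> \<not> blocked_B a xs (E - u)}
      + card {u. L < u \<and> u \<le> N3 \<and> u \<noteq> E \<and> \<not> blocked_C a xs (E - u)})
    \<le> 2 ^ ((N1 + N2 + N3 - 3 * E + 3) + (card {t\<in>{1..L}. \<not> blocked_A xs t}
      + card {t\<in>{1..L}. \<not> blocked_B a xs t} + card {t\<in>{1..L}. \<not> blocked_C a xs t}))"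
  proof (rule power_increasing)
    show "card {u. L < u \<and> u \<le> N1 \<and> u \<noteq> E \<and> \<not> blocked_A xs (E - u)}
      + card {u. L < u \<and> u \<le> N2 \<and> u \<noteq> E \<and> \<not> blocked_B a xs (E - u)}
      + card {u. L < u \<and> u \<le> N3 \<and> u \<noteq> E \<and> \<not> blocked_C a xs (E - u)}
      \<le> (N1 + N2 + N3 - 3 * E + 3) + (card {t\<in>{1..L}. \<not> blocked_A xs t}
        + card {t\<in>{1..L}. \<not> blocked_B a xs t} + card {t\<in>{1..L}. \<not> blocked_C a xs t})"
      using card_high_positions_le[OF EL, of N1 "\<lambda>t. \<not> blocked_A xs t"]
        card_high_positions_le[OF EL, of N2 "\<lambda>t. \<not> blocked_B a xs t"]
        card_high_positions_le[OF EL, of N3 "\<lambda>t. \<not> blocked_C a xs t"] EN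
      by linarith
  qed simp
  then show ?thesis
    unfolding word_weight_eq_blocked xs by (simp add: power_add)
qed

lemma card_same_low_word_le:
  assumes xs: "length xs = L" and EL: "E \<le> 2 * L + 2" and EN: "E \<le> N1" "E \<le> N2" "E \<le> N3"
  shows "real (card {(A, B, C) \<in> triples_led_by_A N1 N2 N3 E L a. low_word L A B C = xs})
    \<le> 2 ^ (N1 + N2 + N3 - 3 * E + 3) * word_weight a xs"
proof -
  define high_A where "high_A = {u. L < u \<and> u \<le> N1 \<and> u \<noteq> E \<and> \<not> blocked_A xs (E - u)}"
  define high_B where "high_B = {u. L < u \<and> u \<le> N2 \<and> u \<noteq> E \<and> \<not> blocked_B a xs (E - u)}"
  define high_C where "high_C = {u. L < u \<and> u \<le> N3 \<and> u \<noteq> E \<and> \<not> blocked_C a xs (E - u)}"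
  define low where "low f = insert 0 {t\<in>{1..L}. f (cell_at xs t)}" for f :: "cell \<Rightarrow> bool"
  define glue where "glue = (\<lambda>(P, Q, R). (low fst \<union> P, low (fst \<circ> snd) \<union> Q, low (snd \<circ> snd) \<union> R))"
  have fin: "finite high_A" "finite high_B" "finite high_C"
    by (auto simp: high_A_def high_B_def high_C_def)
  have "{(A, B, C) \<in> triples_led_by_A N1 N2 N3 E L a. low_word L A B C = xs}
      \<subseteq> glue ` (Pow high_A \<times> Pow high_B \<times> Pow high_C)"
  proof (clarify)
    fix A B C assume X: "(A, B, C) \<in> triples_led_by_A N1 N2 N3 E L a" and xs_eq: "xs = low_word L A B C"
    have zero: "0 \<in> A" "0 \<in> B" "0 \<in> C"
      using X by (auto simp: triples_led_by_A_def avoiding_triples_def)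
    have low_eq: "low fst = insert 0 {t\<in>{1..L}. t \<in> A}" "low (fst \<circ> snd) = insert 0 {t\<in>{1..L}. t \<in> B}"
      "low (snd \<circ> snd) = insert 0 {t\<in>{1..L}. t \<in> C}"
      by (auto simp: low_def xs_eq cell_at_low_word)
    have split: "insert 0 {t\<in>{1..L}. t \<in> S} \<union> S \<inter> {L<..} = S" if "0 \<in> S" for S :: "nat set"
      using that by (auto simp: not_less Suc_le_eq)
    have "(A, B, C) = glue (A \<inter> {L<..}, B \<inter> {L<..}, C \<inter> {L<..})"
      unfolding glue_def low_eq using split zero by simp
    moreover have "A \<inter> {L<..} \<subseteq> high_A" "B \<inter> {L<..} \<subseteq> high_B" "C \<inter> {L<..} \<subseteq> high_C"
      using high_part_unblocked[OF X EL] by (simp_all add: high_A_def high_B_def high_C_def xs_eq)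
    ultimately show "(A, B, C) \<in> glue ` (Pow high_A \<times> Pow high_B \<times> Pow high_C)"
      by blast
  qed
  then have "card {(A, B, C) \<in> triples_led_by_A N1 N2 N3 E L a. low_word L A B C = xs}
      \<le> card (glue ` (Pow high_A \<times> Pow high_B \<times> Pow high_C))"
    using fin by (intro card_mono) auto
  also have "\<dots> \<le> card (Pow high_A \<times> Pow high_B \<times> Pow high_C)"
    using fin by (intro card_image_le) auto
  also have "\<dots> = 2 ^ (card high_A + card high_B + card high_C)"
    using fin by (simp add: card_cartesian_product card_Pow power_add)
  finally have "real (card {(A, B, C) \<in> triples_led_by_A N1 N2 N3 E L a. low_word L A B C = xs})
      \<le> real (2 ^ (card high_A + card high_B + card high_C))"
    by (rule of_nat_mono)
  also have "\<dots> = 2 ^ (card high_A + card high_B + card high_C)"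
    by simp
  also have "\<dots> \<le> 2 ^ (N1 + N2 + N3 - 3 * E + 3) * word_weight a xs"
    unfolding high_A_def high_B_def high_C_def by (rule unblocked_high_positions_le[OF xs EL EN])
  finally show ?thesis .
qed

lemma card_triples_led_by_A_le:
  assumes a: "1 \<le> a" "a \<le> L + 1" and EL: "E \<le> 2 * L + 2" and EN: "E \<le> N1" "E \<le> N2" "E \<le> N3"
  shows "real (card (triples_led_by_A N1 N2 N3 E L a)) \<le> 2 ^ (N1 + N2 + N3 - 3 * E) * (153/10) ^ (L + 1)"
proof -
  define same_low where
    "same_low xs = {(A, B, C) \<in> triples_led_by_A N1 N2 N3 E L a. low_word L A B C = xs}" for xs
  have finite_same_low: "finite (same_low xs)" for xs
    by (rule finite_subset[OF _ finite_avoiding_triples[of N1 N2 N3 "int E"]])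
      (auto simp: same_low_def triples_led_by_A_def)
  have "triples_led_by_A N1 N2 N3 E L a \<subseteq> (\<Union>xs\<in>lag_words a L. same_low xs)"
  proof (clarify)
    fix A B C assume X: "(A, B, C) \<in> triples_led_by_A N1 N2 N3 E L a"
    then have "low_word L A B C \<in> lag_words a L"
      by (auto simp: lag_words_def cell_at_low_word triples_led_by_A_def)
    then show "(A, B, C) \<in> (\<Union>xs\<in>lag_words a L. same_low xs)"
      using X by (auto simp: same_low_def)
  qed
  then have "card (triples_led_by_A N1 N2 N3 E L a) \<le> (\<Sum>xs\<in>lag_words a L. card (same_low xs))"
    using finite_same_low finite_lag_words
    by (intro card_mono[THEN order_trans, OF _ _ card_UN_le]) auto
  then have "real (card (triples_led_by_A N1 N2 N3 E L a)) \<le> (\<Sum>xs\<in>lag_words a L. real (card (same_low xs)))"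
    by (simp flip: of_nat_sum)
  also have "\<dots> \<le> (\<Sum>xs\<in>lag_words a L. 2 ^ (N1 + N2 + N3 - 3 * E + 3) * word_weight a xs)"
    unfolding same_low_def
    by (intro sum_mono card_same_low_word_le EL EN) (simp add: lag_words_def)
  also have "\<dots> \<le> 2 ^ (N1 + N2 + N3 - 3 * E + 3) * ((153/10) ^ (L + 1) / 8)"
    unfolding sum_distrib_left[symmetric] by (intro mult_left_mono sum_word_weight_le a) simp
  finally show ?thesis
    by (simp add: power_add)
qed

lemma avoiding_triples_swap:
  assumes "(A, B, C) \<in> avoiding_triples N1 N2 N3 E"
  shows "(B, A, C) \<in> avoiding_triples N2 N1 N3 E" "(C, B, A) \<in> avoiding_triples N3 N2 N1 E"
proof -
  have no_sum: "int (a + b + c) \<noteq> E" if "a \<in> A" "b \<in> B" "c \<in> C" for a b c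
    using assms that unfolding avoiding_triples_def by blast
  have "int (b + a + c) \<noteq> E" "int (c + b + a) \<noteq> E" if "a \<in> A" "b \<in> B" "c \<in> C" for a b c
    using no_sum[OF that] by (simp_all add: ac_simps)
  then show "(B, A, C) \<in> avoiding_triples N2 N1 N3 E" "(C, B, A) \<in> avoiding_triples N3 N2 N1 E"
    using assms unfolding avoiding_triples_def by auto
qed

text \<open>Classification by the least positive element $a \le L$ of $A \cup B \cup C$; permuting the sets
  moves it into $A$.\<close>

lemma avoiding_triples_subset_led:
  "avoiding_triples N1 N2 N3 (int E) \<subseteq> triples_led_by_A N1 N2 N3 E L (L + 1) \<union>
     (\<Union>a\<in>{1..L}. triples_led_by_A N1 N2 N3 E L a
        \<union> (\<lambda>(B, A, C). (A, B, C)) ` triples_led_by_A N2 N1 N3 E L a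
        \<union> (\<lambda>(C, B, A). (A, B, C)) ` triples_led_by_A N3 N2 N1 E L a)"
  (is "_ \<subseteq> ?first \<union> (\<Union>a\<in>{1..L}. ?led a)")
proof
  fix X assume "X \<in> avoiding_triples N1 N2 N3 (int E)"
  then obtain A B C where X_eq: "X = (A, B, C)" and X: "(A, B, C) \<in> avoiding_triples N1 N2 N3 (int E)"
    by (cases X) auto
  show "X \<in> ?first \<union> (\<Union>a\<in>{1..L}. ?led a)"
  proof (cases "\<exists>t. 1 \<le> t \<and> t \<le> L \<and> (t \<in> A \<or> t \<in> B \<or> t \<in> C)")
    case False
    then have "X \<in> ?first"
      using X by (auto simp: X_eq triples_led_by_A_def)
    then show ?thesis ..
  next
    case True
    define a where "a = (LEAST t. 1 \<le> t \<and> t \<le> L \<and> (t \<in> A \<or> t \<in> B \<or> t \<in> C))"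
    have a: "1 \<le> a" "a \<le> L" "a \<in> A \<or> a \<in> B \<or> a \<in> C"
      using LeastI_ex[OF True] unfolding a_def by blast+
    have least: "\<forall>t\<in>{1..<a}. t \<notin> A \<and> t \<notin> B \<and> t \<notin> C"
    proof
      fix t assume "t \<in> {1..<a}"
      then show "t \<notin> A \<and> t \<notin> B \<and> t \<notin> C"
        using not_less_Least[of t "\<lambda>t. 1 \<le> t \<and> t \<le> L \<and> (t \<in> A \<or> t \<in> B \<or> t \<in> C)"] a(2)
        unfolding a_def[symmetric] by auto
    qed
    note swaps = avoiding_triples_swap[OF X]
    have "X \<in> ?led a"
      using a(3)
    proof (elim disjE)
      assume "a \<in> A"
      then show ?thesis
        using X least by (simp add: X_eq triples_led_by_A_def)
    next
      assume "a \<in> B"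
      then have "(B, A, C) \<in> triples_led_by_A N2 N1 N3 E L a"
        using swaps least by (auto simp: triples_led_by_A_def)
      then show ?thesis
        unfolding X_eq by (intro UnI1 UnI2 image_eqI[where x = "(B, A, C)"]) simp_all
    next
      assume "a \<in> C"
      then have "(C, B, A) \<in> triples_led_by_A N3 N2 N1 E L a"
        using swaps least by (auto simp: triples_led_by_A_def)
      then show ?thesis
        unfolding X_eq by (intro UnI2 image_eqI[where x = "(C, B, A)"]) simp_all
    qed
    moreover have "a \<in> {1..L}"
      using a by simp
    ultimately show ?thesis
      by (rule UnI2[OF UN_I, rotated])
  qed
qed

lemma card_Un_images_le:
  assumes "finite B" "finite C"
  shows "card (A \<union> f ` B \<union> g ` C) \<le> card A + card B + card C"
  using card_Un_le[of "A \<union> f ` B" "g ` C"] card_Un_le[of A "f ` B"]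
    card_image_le[OF assms(1), of f] card_image_le[OF assms(2), of g]
  by linarith

lemma card_avoiding_triples_le:
  assumes "E \<le> 2 * L + 2" "E \<le> N1" "E \<le> N2" "E \<le> N3"
  shows "real (card (avoiding_triples N1 N2 N3 (int E)))
    \<le> (3 * real L + 1) * (2 ^ (N1 + N2 + N3 - 3 * E) * (153/10) ^ (L + 1))"
proof -
  define T where "T M1 M2 M3 a = triples_led_by_A M1 M2 M3 E L a" for M1 M2 M3 a
  define K :: real where "K = 2 ^ (N1 + N2 + N3 - 3 * E) * (153/10) ^ (L + 1)"
  have T_le: "real (card (T M1 M2 M3 a)) \<le> K"
    if "1 \<le> a" "a \<le> L + 1" "E \<le> M1" "E \<le> M2" "E \<le> M3" "M1 + M2 + M3 = N1 + N2 + N3"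
    for a M1 M2 M3
    using card_triples_led_by_A_le[OF that(1,2) assms(1) that(3-5)] that(6) unfolding K_def T_def by simp
  have finite_T: "finite (T M1 M2 M3 a)" for M1 M2 M3 a
    by (rule finite_subset[OF _ finite_avoiding_triples]) (auto simp: T_def triples_led_by_A_def)
  have "avoiding_triples N1 N2 N3 (int E) \<subseteq> T N1 N2 N3 (L + 1) \<union> (\<Union>a\<in>{1..L}.
      T N1 N2 N3 a \<union> (\<lambda>(B, A, C). (A, B, C)) ` T N2 N1 N3 a \<union> (\<lambda>(C, B, A). (A, B, C)) ` T N3 N2 N1 a)"
    (is "_ \<subseteq> ?first \<union> (\<Union>a\<in>{1..L}. ?led a)")
    unfolding T_def by (rule avoiding_triples_subset_led)
  then have "card (avoiding_triples N1 N2 N3 (int E)) \<le> card (?first \<union> (\<Union>a\<in>{1..L}. ?led a))"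
    using finite_T by (intro card_mono) auto
  also have "\<dots> \<le> card ?first + (\<Sum>a\<in>{1..L}. card (?led a))"
    by (rule order_trans[OF card_Un_le add_left_mono[OF card_UN_le]]) simp
  also have "\<dots> \<le> card (T N1 N2 N3 (L + 1))
      + (\<Sum>a\<in>{1..L}. card (T N1 N2 N3 a) + card (T N2 N1 N3 a) + card (T N3 N2 N1 a))"
    by (intro add_left_mono sum_mono card_Un_images_le finite_T)
  finally have "real (card (avoiding_triples N1 N2 N3 (int E))) \<le> real (card (T N1 N2 N3 (L + 1)))
      + (\<Sum>a\<in>{1..L}. real (card (T N1 N2 N3 a)) + real (card (T N2 N1 N3 a)) + real (card (T N3 N2 N1 a)))"
    by (simp flip: of_nat_add of_nat_sum)
  also have "\<dots> \<le> K + (\<Sum>a\<in>{1..L}. K + K + K)"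
    using assms by (intro add_mono sum_mono T_le) auto
  also have "\<dots> = (3 * real L + 1) * K"
    by (simp add: algebra_simps)
  finally show ?thesis
    unfolding K_def .
qed

lemma linear_mult_power_le: "(3 * real L + 1) * (49/50) ^ L \<le> 147"
proof -
  have "1 + real L * (1/49) \<le> (1 + 1/49) ^ L"
    using Bernoulli_inequality[of "1/49::real" L] by simp
  then have Bernoulli: "(49 + real L) / 49 \<le> (50/49) ^ L"
    by (simp add: field_simps)
  have pos: "(0::real) < (49/50) ^ L"
    by simp
  have "(49/50::real) ^ L * (50/49) ^ L = 1"
    by (simp add: power_mult_distrib[symmetric])
  then have "(49/50::real) ^ L * ((49 + real L) / 49) \<le> 1"
    using mult_left_mono[OF Bernoulli, of "(49/50) ^ L"] pos by simp
  then have "(49/50::real) ^ L * (49 + real L) \<le> 49"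
    by (simp add: field_simps)
  moreover have "(3 * real L + 1) * (49/50) ^ L \<le> 3 * ((49/50) ^ L * (49 + real L))"
    using pos by (simp add: algebra_simps)
  ultimately show ?thesis
    by linarith
qed

lemma two_powr_one_fiftieth_le: "2 powr (1/50) \<le> (51/50 :: real)"
proof -
  have "1 + real 50 * (1/50) \<le> (1 + 1/50 :: real) ^ 50"
    by (rule Bernoulli_inequality) simp
  then have "2 powr (1/50) \<le> ((51/50 :: real) ^ 50) powr (1/50)"
    by (intro powr_mono2) auto
  also have "(51/50 :: real) ^ 50 = (51/50) powr (real 50)"
    by (rule powr_realpow[symmetric]) simp
  also have "((51/50 :: real) powr (real 50)) powr (1/50) = (51/50) powr (real 50 * (1/50))"
    by (rule powr_powr)
  also have "real 50 * (1/50) = (1::real)"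
    by simp
  finally show ?thesis
    by simp
qed

text \<open>The point is $15.3 \cdot 2^{1/50} \le 15.3 \cdot 51/50 < 16$: the gap between $15.3$ and $2^4$,
  per unit of $L \approx E/2$, pays for the saving of $2^{E/100}$.\<close>

lemma transfer_growth_mult_le:
  "(3 * real L + 1) * (153/10) ^ (L + 1) * 2 powr ((1/100) * (2 * real L + 1)) \<le> 2 ^ (4 * L + 13)"
proof -
  have "(1/100) * (2 * real L + 1) = 1/100 + real L * (1/50)"
    by simp
  then have "2 powr ((1/100) * (2 * real L + 1)) = 2 powr (1/100) * (2 powr (1/50)) ^ L"
    by (simp only: powr_add powr_power)
  also have "\<dots> \<le> 2 * (51/50) ^ L"
    using powr_mono[of "1/100" 1 "2::real"] two_powr_one_fiftieth_le
    by (intro mult_mono power_mono) auto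
  finally have Q_le: "2 powr ((1/100) * (2 * real L + 1)) \<le> 2 * (51/50 :: real) ^ L" .
  have "(3 * real L + 1) * (153/10) ^ (L + 1) * 2 powr ((1/100) * (2 * real L + 1))
      = 16 ^ (L + 1) * ((3 * real L + 1) * (153/160) ^ (L + 1) * 2 powr ((1/100) * (2 * real L + 1)))"
    by (simp add: power_mult_distrib[symmetric])
  also have "\<dots> \<le> 16 ^ (L + 1) * ((3 * real L + 1) * (153/160) ^ (L + 1) * (2 * (51/50) ^ L))"
    using Q_le by (intro mult_left_mono) auto
  also have "\<dots> = 16 ^ (L + 1) * (2 * (153/160) * ((3 * real L + 1) * ((153/160) * (51/50)) ^ L))"
    by (simp only: power_mult_distrib power_Suc Suc_eq_plus1[symmetric] mult_ac)
  also have "\<dots> \<le> 16 ^ (L + 1) * (2 * (153/160) * ((3 * real L + 1) * (49/50) ^ L))"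
    by (intro mult_left_mono power_mono) auto
  also have "\<dots> \<le> 16 ^ (L + 1) * 512"
    using linear_mult_power_le[of L] by (intro mult_left_mono) auto
  also have "\<dots> = 2 ^ (4 * L + 13)"
    by (simp add: power_add power_mult)
  finally show ?thesis .
qed

lemma transfer_growth_le:
  assumes "2 * L + 1 \<le> E"
  shows "(3 * real L + 1) * (153/10) ^ (L + 1) \<le> 2 powr ((2 - 1/100) * real E + 11)"
proof -
  define Q where "Q = 2 powr ((1/100) * (2 * real L + 1))"
  have "(2::real) powr real (4 * L + 13) = 2 ^ (4 * L + 13)"
    by (rule powr_realpow) simp
  then have "(3 * real L + 1) * (153/10) ^ (L + 1) \<le> 2 powr real (4 * L + 13) / Q"
    using transfer_growth_mult_le[of L] by (simp only: Q_def pos_le_divide_eq powr_gt_zero)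
  also have "\<dots> = 2 powr ((2 - 1/100) * (2 * real L + 1) + 11)"
  proof -
    have "(2 - 1/100) * (2 * real L + 1) + 11 = real (4 * L + 13) - (1/100) * (2 * real L + 1)"
      by (simp add: field_simps)
    then show ?thesis
      by (simp only: Q_def powr_diff)
  qed
  also have "\<dots> \<le> 2 powr ((2 - 1/100) * real E + 11)"
    using assms by (intro powr_mono) auto
  finally show ?thesis .
qed

lemma card_avoiding_triples_powr_le:
  assumes "E \<le> int N1" "E \<le> int N2" "E \<le> int N3"
  shows "real (card (avoiding_triples N1 N2 N3 E))
    \<le> 2 powr (real (N1 + N2 + N3) - real_of_int E - (1/100) * \<bar>real_of_int E\<bar> + 11)"
proof (cases "E \<ge> 1")
  case False
  have "avoiding_triples N1 N2 N3 E \<subseteq> Pow {..N1} \<times> Pow {..N2} \<times> Pow {..N3}"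
    by (auto simp: avoiding_triples_def)
  then have "card (avoiding_triples N1 N2 N3 E) \<le> card (Pow {..N1} \<times> Pow {..N2} \<times> Pow {..N3})"
    by (intro card_mono) auto
  also have "\<dots> = 2 ^ (N1 + N2 + N3 + 3)"
    by (simp add: card_cartesian_product card_Pow power_add)
  finally have "real (card (avoiding_triples N1 N2 N3 E)) \<le> 2 ^ (N1 + N2 + N3 + 3)"
    by (metis of_nat_le_iff of_nat_numeral of_nat_power)
  also have "\<dots> = 2 powr real (N1 + N2 + N3 + 3)"
    by (rule powr_realpow[symmetric]) simp
  also have "\<dots> \<le> 2 powr (real (N1 + N2 + N3) - real_of_int E - (1/100) * \<bar>real_of_int E\<bar> + 11)"
    using False by (intro powr_mono) auto
  finally show ?thesis .
next
  case True
  define e where "e = nat E"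
  define L where "L = (e - 1) div 2"
  have e: "E = int e" "1 \<le> e" "e \<le> N1" "e \<le> N2" "e \<le> N3"
    using assms True by (auto simp: e_def)
  have L: "2 * L + 1 \<le> e" "e \<le> 2 * L + 2"
    using e by (auto simp: L_def)
  have "real (card (avoiding_triples N1 N2 N3 E))
      \<le> (3 * real L + 1) * (2 ^ (N1 + N2 + N3 - 3 * e) * (153/10) ^ (L + 1))"
    unfolding e(1) using e L by (intro card_avoiding_triples_le) auto
  also have "\<dots> = 2 ^ (N1 + N2 + N3 - 3 * e) * ((3 * real L + 1) * (153/10) ^ (L + 1))"
    by (simp only: mult_ac)
  also have "\<dots> \<le> 2 ^ (N1 + N2 + N3 - 3 * e) * 2 powr ((2 - 1/100) * real e + 11)"
    using transfer_growth_le[OF L(1)] by (intro mult_left_mono) auto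
  also have "\<dots> = 2 powr (real (N1 + N2 + N3 - 3 * e) + ((2 - 1/100) * real e + 11))"
    by (simp only: powr_add powr_realpow zero_less_numeral)
  also have "real (N1 + N2 + N3 - 3 * e) + ((2 - 1/100) * real e + 11)
      = real (N1 + N2 + N3) - real_of_int E - (1/100) * \<bar>real_of_int E\<bar> + 11"
    using e by (simp add: of_nat_diff algebra_simps)
  finally show ?thesis .
qed

section \<open>Fibers and height profiles\<close>

lemma le_half_iff: "z \<le> w div 2 \<longleftrightarrow> 2 * z \<le> (w :: int)"
  by presburger

lemma half_up_le_iff: "(w + 1) div 2 \<le> z \<longleftrightarrow> (w :: int) \<le> 2 * z"
  by presburger

lemma c07_ge: "real_of_int (c07 n) \<ge> 7/10 * real n"
  unfolding c07_def by linarith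

lemma wid_le: "real_of_int (wid n) \<le> 4/10 * real n"
  unfolding wid_def by linarith

lemma finite_LamR: "finite (LamR n)"
proof -
  have "(x, y) \<in> {- int n..int n} \<times> {- int n..int n}" if xy: "(x, y) \<in> LamR n" for x y
  proof -
    have "real_of_int x \<le> real_of_int (int n) \<and> real_of_int y \<le> real_of_int (int n)
        \<and> real_of_int (- int n) \<le> real_of_int x \<and> real_of_int (- int n) \<le> real_of_int y"
      using xy unfolding LamR_def abs_le_iff by auto
    then show ?thesis
      by (simp only: of_int_le_iff) simp
  qed
  then have "LamR n \<subseteq> {- int n..int n} \<times> {- int n..int n}"
    by auto
  then show ?thesis
    by (rule finite_subset) simp
qed

lemma finite_LamL: "finite (LamL n)"
proof -
  have "(x, y) \<in> {- 2 * int n..2 * int n} \<times> {- 2 * int n..2 * int n}" if xy: "(x, y) \<in> LamL n" for x y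
  proof -
    have "0 \<le> real_of_int x + real_of_int y"
      using xy c07_ge[of n] by (auto simp: LamL_def)
    with xy have "real_of_int x \<le> real_of_int (2 * int n) \<and> real_of_int y \<le> real_of_int (2 * int n)
        \<and> real_of_int (- 2 * int n) \<le> real_of_int x \<and> real_of_int (- 2 * int n) \<le> real_of_int y"
      unfolding LamL_def abs_le_iff by auto
    then show ?thesis
      by (simp only: of_int_le_iff) simp
  qed
  then have "LamL n \<subseteq> {- 2 * int n..2 * int n} \<times> {- 2 * int n..2 * int n}"
    by auto
  then show ?thesis
    by (rule finite_subset) simp
qed

lemma fibR_iff:
  assumes "\<bar>i\<bar> \<le> 2 * wid n"
  shows "(y + i, y) \<in> fibR n i \<longleftrightarrow> c07 n \<le> 2 * y + i \<and> 2 * y + i \<le> int n"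
proof -
  have "real_of_int \<bar>i\<bar> \<le> 8/10 * real n"
    using assms wid_le[of n] by linarith
  then have "(y + i, y) \<in> fibR n i \<longleftrightarrow> 7/10 * real n \<le> real_of_int (2 * y + i) \<and> real_of_int (2 * y + i) \<le> real_of_int (int n)"
    by (auto simp: fibR_def LamR_def algebra_simps)
  also have "\<dots> \<longleftrightarrow> c07 n \<le> 2 * y + i \<and> 2 * y + i \<le> int n"
    unfolding c07_def by (simp only: ceiling_le_iff of_int_le_iff)
  finally show ?thesis .
qed

lemma fibL_iff:
  assumes "\<bar>k\<bar> \<le> wid n"
  shows "(y + k, y) \<in> fibL n k \<longleftrightarrow> 2 * c07 n \<le> 2 * y + k \<and> real_of_int (2 * y + k) \<le> 17/10 * real n"
proof -
  have "real_of_int \<bar>k\<bar> \<le> 4/10 * real n"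
    using assms wid_le[of n] by linarith
  then show ?thesis
    by (auto simp: fibL_def LamL_def algebra_simps)
qed

lemma fibL_top_le:
  assumes "\<bar>k\<bar> \<le> wid n" "(y + k, y) \<in> fibL n k"
  shows "2 * y + k \<le> int n + c07 n"
proof -
  have "real_of_int (2 * y + k) \<le> 17/10 * real n"
    using assms fibL_iff by blast
  then have "real_of_int (2 * y + k) \<le> real_of_int (int n + c07 n)"
    using c07_ge[of n] by simp
  then show ?thesis
    by (simp only: of_int_le_iff)
qed

lemma fibR_elem: "p \<in> fibR n i \<Longrightarrow> p = (snd p + i, snd p)"
  by (cases p) (simp add: fibR_def)

lemma fibL_elem: "p \<in> fibL n k \<Longrightarrow> p = (snd p + k, snd p)"
  by (cases p) (simp add: fibL_def)

lemma hR_fibR: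
  assumes "p \<in> fibR n i"
  shows "hR n p = snd p + (i - c07 n) div 2"
proof -
  have "hR n p = (fst p + snd p - c07 n) div 2"
    unfolding hR_def using floor_divide_of_int_eq[of "fst p + snd p - c07 n" 2] by simp
  moreover have "fst p = snd p + i"
    using assms by (simp add: fibR_def)
  ultimately show ?thesis
    by presburger
qed

lemma hL_fibL:
  assumes "p \<in> fibL n k"
  shows "hL n p = snd p + (k - 2 * c07 n) div 2"
proof -
  have "hL n p = (fst p + snd p - 2 * c07 n) div 2"
    unfolding hL_def using floor_divide_of_int_eq[of "fst p + snd p - 2 * c07 n" 2] by simp
  moreover have "fst p = snd p + k"
    using assms by (simp add: fibL_def)
  ultimately show ?thesis
    by presburger
qed

lemma finite_fibR: "finite (fibR n i)"
  using finite_LamR by (rule finite_subset[rotated]) (auto simp: fibR_def)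

lemma finite_fibL: "finite (fibL n k)"
  using finite_LamL by (rule finite_subset[rotated]) (auto simp: fibL_def)

definition y_of_hR :: "nat \<Rightarrow> int \<Rightarrow> int \<Rightarrow> int" where
  "y_of_hR n i h = h - (i - c07 n) div 2"

definition y_of_hL :: "nat \<Rightarrow> int \<Rightarrow> int \<Rightarrow> int" where
  "y_of_hL n k h = h - (k - 2 * c07 n) div 2"

definition steps_up_R :: "nat \<Rightarrow> int \<Rightarrow> int \<Rightarrow> nat" where
  "steps_up_R n i y = nat ((int n - i) div 2 - y)"

definition steps_down_L :: "nat \<Rightarrow> int \<Rightarrow> int \<Rightarrow> nat" where
  "steps_down_L n k y = nat (y - (2 * c07 n - k + 1) div 2)"

lemma profile_lowest_point:
  assumes S: "has_profile n S m M" and i: "\<bar>i\<bar> \<le> 2 * wid n"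
  defines "y0 \<equiv> y_of_hR n i (m i)"
  shows "(y0 + i, y0) \<in> S \<inter> fibR n i" and "\<And>p. p \<in> S \<inter> fibR n i \<Longrightarrow> y0 \<le> snd p"
proof -
  have fin: "finite (S \<inter> fibR n i)"
    by (simp add: finite_fibR)
  have ne: "S \<inter> fibR n i \<noteq> {}" and m: "m i = Min (hR n ` (S \<inter> fibR n i))"
    using S i by (auto simp: has_profile_def meets_all_fibers_def)
  from ne have "Min (hR n ` (S \<inter> fibR n i)) \<in> hR n ` (S \<inter> fibR n i)"
    using fin by (intro Min_in) auto
  then obtain q where q: "q \<in> S \<inter> fibR n i" "hR n q = m i"
    using m by auto
  then have "snd q = y0"
    using q hR_fibR[of q n i] unfolding y0_def y_of_hR_def by simp
  then have "q = (y0 + i, y0)"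
    using q fibR_elem[of q n i] by simp
  with q show "(y0 + i, y0) \<in> S \<inter> fibR n i"
    by simp
  fix p assume p: "p \<in> S \<inter> fibR n i"
  then have "m i \<le> hR n p"
    unfolding m using fin by (intro Min_le) auto
  with p show "y0 \<le> snd p"
    using hR_fibR[of p] by (auto simp: y0_def y_of_hR_def)
qed

lemma profile_highest_point:
  assumes S: "has_profile n S m M" and k: "\<bar>k\<bar> \<le> wid n"
  defines "y0 \<equiv> y_of_hL n k (M k)"
  shows "(y0 + k, y0) \<in> S \<inter> fibL n k" and "\<And>p. p \<in> S \<inter> fibL n k \<Longrightarrow> snd p \<le> y0"
proof -
  have fin: "finite (S \<inter> fibL n k)"
    by (simp add: finite_fibL)
  have ne: "S \<inter> fibL n k \<noteq> {}" and M: "M k = Max (hL n ` (S \<inter> fibL n k))"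
    using S k by (auto simp: has_profile_def meets_all_fibers_def)
  from ne have "Max (hL n ` (S \<inter> fibL n k)) \<in> hL n ` (S \<inter> fibL n k)"
    using fin by (intro Max_in) auto
  then obtain q where q: "q \<in> S \<inter> fibL n k" "hL n q = M k"
    using M by auto
  then have "snd q = y0"
    using q hL_fibL[of q n k] unfolding y0_def y_of_hL_def by simp
  then have "q = (y0 + k, y0)"
    using q fibL_elem[of q n k] by simp
  with q show "(y0 + k, y0) \<in> S \<inter> fibL n k"
    by simp
  fix p assume p: "p \<in> S \<inter> fibL n k"
  then have "hL n p \<le> M k"
    unfolding M using fin by (intro Max_ge) auto
  with p show "snd p \<le> y0"
    using hL_fibL[of p] by (auto simp: y0_def y_of_hL_def)
qed

lemma fibR_above:
  assumes i: "\<bar>i\<bar> \<le> 2 * wid n" and y0: "(y0 + i, y0) \<in> fibR n i"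
  shows "{p \<in> fibR n i. y0 \<le> snd p} = (\<lambda>t. (y0 + int t + i, y0 + int t)) ` {..steps_up_R n i y0}"
proof (intro set_eqI iffI)
  fix p assume p: "p \<in> {p \<in> fibR n i. y0 \<le> snd p}"
  then have "2 * snd p + i \<le> int n"
    using fibR_iff[OF i, of "snd p"] fibR_elem[of p] by auto
  then have "nat (snd p - y0) \<le> steps_up_R n i y0" "p = (y0 + int (nat (snd p - y0)) + i, y0 + int (nat (snd p - y0)))"
    using p fibR_elem[of p] by (auto simp: steps_up_R_def le_half_iff)
  then show "p \<in> (\<lambda>t. (y0 + int t + i, y0 + int t)) ` {..steps_up_R n i y0}"
    by blast
next
  fix p assume "p \<in> (\<lambda>t. (y0 + int t + i, y0 + int t)) ` {..steps_up_R n i y0}"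
  then obtain t where p: "p = (y0 + int t + i, y0 + int t)" and t: "t \<le> steps_up_R n i y0"
    by blast
  have y0_bounds: "c07 n \<le> 2 * y0 + i" "2 * y0 + i \<le> int n"
    using y0 fibR_iff[OF i] by simp_all
  then have "int t \<le> (int n - i) div 2 - y0"
    using t by (simp add: steps_up_R_def le_half_iff)
  then have "2 * (y0 + int t) + i \<le> int n"
    by (simp add: le_half_iff[symmetric])
  moreover note y0_bounds(1)
  ultimately show "p \<in> {p \<in> fibR n i. y0 \<le> snd p}"
    using fibR_iff[OF i, of "y0 + int t"] by (simp add: p)
qed

lemma fibL_below:
  assumes k: "\<bar>k\<bar> \<le> wid n" and y0: "(y0 + k, y0) \<in> fibL n k"
  shows "{p \<in> fibL n k. snd p \<le> y0} = (\<lambda>t. (y0 - int t + k, y0 - int t)) ` {..steps_down_L n k y0}"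
proof (intro set_eqI iffI)
  fix p assume p: "p \<in> {p \<in> fibL n k. snd p \<le> y0}"
  then have "2 * c07 n \<le> 2 * snd p + k"
    using fibL_iff[OF k, of "snd p"] fibL_elem[of p] by auto
  then have "nat (y0 - snd p) \<le> steps_down_L n k y0" "p = (y0 - int (nat (y0 - snd p)) + k, y0 - int (nat (y0 - snd p)))"
    using p fibL_elem[of p] by (auto simp: steps_down_L_def half_up_le_iff)
  then show "p \<in> (\<lambda>t. (y0 - int t + k, y0 - int t)) ` {..steps_down_L n k y0}"
    by blast
next
  fix p assume "p \<in> (\<lambda>t. (y0 - int t + k, y0 - int t)) ` {..steps_down_L n k y0}"
  then obtain t where p: "p = (y0 - int t + k, y0 - int t)" and t: "t \<le> steps_down_L n k y0"
    by blast
  have y0_bounds: "2 * c07 n \<le> 2 * y0 + k" "real_of_int (2 * y0 + k) \<le> 17/10 * real n"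
    using y0 fibL_iff[OF k] by simp_all
  then have "int t \<le> y0 - (2 * c07 n - k + 1) div 2"
    using t by (simp add: steps_down_L_def half_up_le_iff)
  then have "2 * c07 n \<le> 2 * (y0 - int t) + k"
    by (simp add: half_up_le_iff[symmetric])
  moreover note y0_bounds(2)
  ultimately show "p \<in> {p \<in> fibL n k. snd p \<le> y0}"
    using fibL_iff[OF k, of "y0 - int t"] by (simp add: p)
qed

section \<open>Restrictions of sum-free sets to three fibers\<close>

text \<open>$A$ and $B$ count diagonal steps up from the lowest points $(y_a + i, y_a)$, $(y_b + j, y_b)$ of $S$
  on $R_i$, $R_j$, and $C$ counts steps down from the highest point $(y_c + i + j, y_c)$ on $L_{i+j}$;
  two of the former add up to one of the latter iff $a + b + c = y_c - y_a - y_b$.\<close>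

definition lift_triple :: "int \<Rightarrow> int \<Rightarrow> int \<Rightarrow> int \<Rightarrow> int \<Rightarrow> nat set \<times> nat set \<times> nat set \<Rightarrow> pt set" where
  "lift_triple i j ya yb yc = (\<lambda>(A, B, C).
     (\<lambda>t. (ya + int t + i, ya + int t)) ` A \<union> (\<lambda>t. (yb + int t + j, yb + int t)) ` B
     \<union> (\<lambda>t. (yc - int t + (i + j), yc - int t)) ` C)"

lemma sum_free_restriction_in_lift:
  assumes sf: "sum_free S"
    and FA: "S \<inter> FA = S \<inter> (\<lambda>t. (ya + int t + i, ya + int t)) ` {..N1}"
    and FB: "S \<inter> FB = S \<inter> (\<lambda>t. (yb + int t + j, yb + int t)) ` {..N2}"
    and FC: "S \<inter> FC = S \<inter> (\<lambda>t. (yc - int t + (i + j), yc - int t)) ` {..N3}"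
    and anchors: "(ya + i, ya) \<in> S" "(yb + j, yb) \<in> S" "(yc + (i + j), yc) \<in> S"
  shows "S \<inter> (FA \<union> FB \<union> FC) \<in> lift_triple i j ya yb yc ` avoiding_triples N1 N2 N3 (yc - ya - yb)"
proof -
  define A where "A = {t\<in>{..N1}. (ya + int t + i, ya + int t) \<in> S}"
  define B where "B = {t\<in>{..N2}. (yb + int t + j, yb + int t) \<in> S}"
  define C where "C = {t\<in>{..N3}. (yc - int t + (i + j), yc - int t) \<in> S}"
  have "S \<inter> (FA \<union> FB \<union> FC) = (S \<inter> FA) \<union> (S \<inter> FB) \<union> (S \<inter> FC)"
    by blast
  also have "\<dots> = lift_triple i j ya yb yc (A, B, C)"
    unfolding FA FB FC lift_triple_def A_def B_def C_def by blast
  finally have "S \<inter> (FA \<union> FB \<union> FC) = lift_triple i j ya yb yc (A, B, C)" .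
  moreover have "(A, B, C) \<in> avoiding_triples N1 N2 N3 (yc - ya - yb)"
    unfolding avoiding_triples_def
  proof (clarsimp, intro conjI ballI)
    show "A \<subseteq> {..N1}" "B \<subseteq> {..N2}" "C \<subseteq> {..N3}" "0 \<in> A" "0 \<in> B" "0 \<in> C"
      using anchors by (auto simp: A_def B_def C_def)
    fix a b c assume abc: "a \<in> A" "b \<in> B" "c \<in> C"
    show "int a + int b + int c \<noteq> yc - ya - yb"
    proof
      assume "int a + int b + int c = yc - ya - yb"
      then have "(ya + int a + i + (yb + int b + j), ya + int a + (yb + int b)) = (yc - int c + (i + j), yc - int c)"
        by simp
      then show False
        using sf abc unfolding sum_free_def A_def B_def C_def by (metis (no_types, lifting) fst_conv snd_conv mem_Collect_eq)
    qed
  qed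
  ultimately show ?thesis
    by blast
qed

lemma profile_restriction_in_lift:
  assumes i: "\<bar>i\<bar> \<le> 2 * wid n" and j: "\<bar>j\<bar> \<le> 2 * wid n" and k: "\<bar>i + j\<bar> \<le> wid n"
    and sf: "sum_free S" and S: "has_profile n S m M"
  defines "ya \<equiv> y_of_hR n i (m i)" and "yb \<equiv> y_of_hR n j (m j)" and "yc \<equiv> y_of_hL n (i + j) (M (i + j))"
  shows "S \<inter> (fibR n i \<union> fibR n j \<union> fibL n (i + j)) \<in> lift_triple i j ya yb yc `
    avoiding_triples (steps_up_R n i ya) (steps_up_R n j yb) (steps_down_L n (i + j) yc) (yc - ya - yb)"
proof (rule sum_free_restriction_in_lift[OF sf])
  note a = profile_lowest_point[OF S i, folded ya_def] and b = profile_lowest_point[OF S j, folded yb_def]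
    and c = profile_highest_point[OF S k, folded yc_def]
  show "S \<inter> fibR n i = S \<inter> (\<lambda>t. (ya + int t + i, ya + int t)) ` {..steps_up_R n i ya}"
    using a fibR_above[OF i] by blast
  show "S \<inter> fibR n j = S \<inter> (\<lambda>t. (yb + int t + j, yb + int t)) ` {..steps_up_R n j yb}"
    using b fibR_above[OF j] by blast
  show "S \<inter> fibL n (i + j) = S \<inter> (\<lambda>t. (yc - int t + (i + j), yc - int t)) ` {..steps_down_L n (i + j) yc}"
    using c fibL_below[OF k] by blast
  show "(ya + i, ya) \<in> S" "(yb + j, yb) \<in> S" "(yc + (i + j), yc) \<in> S"
    using a(1) b(1) c(1) by simp_all
qed

lemma anchor_lengths:
  assumes i: "\<bar>i\<bar> \<le> 2 * wid n" and j: "\<bar>j\<bar> \<le> 2 * wid n" and k: "\<bar>i + j\<bar> \<le> wid n"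
    and ya: "(ya + i, ya) \<in> fibR n i" and yb: "(yb + j, yb) \<in> fibR n j"
    and yc: "(yc + (i + j), yc) \<in> fibL n (i + j)"
  defines "N1 \<equiv> steps_up_R n i ya" and "N2 \<equiv> steps_up_R n j yb"
    and "N3 \<equiv> steps_down_L n (i + j) yc" and "E \<equiv> yc - ya - yb"
  shows "E \<le> int N1" "E \<le> int N2" "E \<le> int N3"
    and "real (N1 + N2 + N3) \<le> 3/10 * real n + real_of_int E"
proof -
  have bounds: "c07 n \<le> 2 * ya + i" "2 * ya + i \<le> int n" "c07 n \<le> 2 * yb + j" "2 * yb + j \<le> int n"
      "2 * c07 n \<le> 2 * yc + (i + j)" "2 * yc + (i + j) \<le> int n + c07 n"
    using fibR_iff[OF i, of ya] fibR_iff[OF j, of yb] fibL_iff[OF k, of yc] fibL_top_le[OF k yc] ya yb yc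
    by simp_all
  have N: "int N1 = (int n - i) div 2 - ya" "int N2 = (int n - j) div 2 - yb"
      "int N3 = yc - (2 * c07 n - (i + j) + 1) div 2"
    using bounds unfolding N1_def N2_def N3_def steps_up_R_def steps_down_L_def
    by (simp_all add: le_half_iff half_up_le_iff)
  show "E \<le> int N1" "E \<le> int N2" "E \<le> int N3"
    using bounds unfolding N E_def by (simp_all add: le_half_iff half_up_le_iff)
  have "int N1 + int N2 + int N3 \<le> int n - c07 n + E"
    unfolding N E_def using bounds by presburger
  then have "real (N1 + N2 + N3) \<le> real n - real_of_int (c07 n) + real_of_int E"
    by (simp flip: of_int_le_iff)
  then show "real (N1 + N2 + N3) \<le> 3/10 * real n + real_of_int E"
    using c07_ge[of n] by linarith
qed

lemma height_defect_le:
  "\<bar>hk - hj - hi\<bar> \<le> \<bar>y_of_hL n (i + j) hk - y_of_hR n i hi - y_of_hR n j hj\<bar> + 1"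
proof -
  have "0 \<le> (u + v) div 2 - u div 2 - v div 2 \<and> (u + v) div 2 - u div 2 - v div 2 \<le> (1::int)" for u v
    by presburger
  moreover have "i + j - 2 * c07 n = (i - c07 n) + (j - c07 n)"
    by simp
  ultimately show ?thesis
    unfolding y_of_hL_def y_of_hR_def by (smt (verit))
qed

lemma card_restrictions_le:
  assumes i: "\<bar>i\<bar> \<le> 2 * wid n" and j: "\<bar>j\<bar> \<le> 2 * wid n" and k: "\<bar>i + j\<bar> \<le> wid n"
  shows "real (card {S'. \<exists>S. S \<subseteq> LamR n \<union> LamL n \<and> sum_free S \<and> has_profile n S m M \<and>
                          S' = S \<inter> (fibR n i \<union> fibR n j \<union> fibL n (i + j))})
    \<le> 2 powr ((3/10) * real n - 1/100 * real_of_int \<bar>M (i + j) - m j - m i\<bar> + 12)"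
    (is "real (card ?F) \<le> _")
proof (cases "?F = {}")
  case False
  then obtain S0 where S0: "has_profile n S0 m M"
    by blast
  define ya yb yc where "ya = y_of_hR n i (m i)" and "yb = y_of_hR n j (m j)"
    and "yc = y_of_hL n (i + j) (M (i + j))"
  define N1 N2 N3 E where "N1 = steps_up_R n i ya" and "N2 = steps_up_R n j yb"
    and "N3 = steps_down_L n (i + j) yc" and "E = yc - ya - yb"
  have anchors: "(ya + i, ya) \<in> fibR n i" "(yb + j, yb) \<in> fibR n j" "(yc + (i + j), yc) \<in> fibL n (i + j)"
    using profile_lowest_point(1)[OF S0 i] profile_lowest_point(1)[OF S0 j] profile_highest_point(1)[OF S0 k]
    by (simp_all add: ya_def yb_def yc_def)
  note lengths = anchor_lengths[OF i j k anchors, folded N1_def N2_def N3_def E_def]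
  have "?F \<subseteq> lift_triple i j ya yb yc ` avoiding_triples N1 N2 N3 E"
    using profile_restriction_in_lift[OF i j k] unfolding ya_def yb_def yc_def N1_def N2_def N3_def E_def
    by blast
  then have "card ?F \<le> card (avoiding_triples N1 N2 N3 E)"
    by (meson card_image_le card_mono finite_avoiding_triples finite_imageI le_trans)
  then have "real (card ?F) \<le> 2 powr (real (N1 + N2 + N3) - real_of_int E - 1/100 * \<bar>real_of_int E\<bar> + 11)"
    using card_avoiding_triples_powr_le[OF lengths(1-3)] by linarith
  also have "\<dots> \<le> 2 powr ((3/10) * real n - 1/100 * real_of_int \<bar>M (i + j) - m j - m i\<bar> + 12)"
  proof (rule powr_mono)
    have "real_of_int \<bar>M (i + j) - m j - m i\<bar> \<le> \<bar>real_of_int E\<bar> + 1"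
      using height_defect_le[of "M (i + j)" "m j" "m i" n i j]
      unfolding ya_def yb_def yc_def E_def by (simp flip: of_int_le_iff)
    then show "real (N1 + N2 + N3) - real_of_int E - 1/100 * \<bar>real_of_int E\<bar> + 11
        \<le> (3/10) * real n - 1/100 * real_of_int \<bar>M (i + j) - m j - m i\<bar> + 12"
      using lengths(4) by argo
  qed simp
  finally show ?thesis .
next
  case True
  show ?thesis
    unfolding True by simp
qed

theorem mainTheorem16:
  "\<exists>(\<alpha>::real) (C::real). \<alpha> > 0 \<and>
     (\<forall>(n::nat) (i::int) (j::int) (m::int \<Rightarrow> int) (M::int \<Rightarrow> int) S0.
        n > 0 \<longrightarrow> i \<noteq> j \<longrightarrow> \<bar>i\<bar> \<le> 2 * wid n \<longrightarrow> \<bar>j\<bar> \<le> 2 * wid n \<longrightarrow>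
        \<bar>i + j\<bar> \<le> wid n \<longrightarrow>
        S0 \<subseteq> LamR n \<union> LamL n \<longrightarrow> sum_free S0 \<longrightarrow> has_profile n S0 m M \<longrightarrow>
        real (card {S'. \<exists>S. S \<subseteq> LamR n \<union> LamL n \<and> sum_free S \<and> has_profile n S m M \<and>
                          S' = S \<inter> (fibR n i \<union> fibR n j \<union> fibL n (i + j))})
          \<le> 2 powr ((3/10) * real n - \<alpha> * real_of_int \<bar>M (i + j) - m j - m i\<bar> + C))"
  using card_restrictions_le by (intro exI[of _ "1/100"] exI[of _ 12]) auto

end
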